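(* Let $\Gamma=(V,m,\tau)$ be a weak $W$-graph and let $A\subseteq\Delta$. Then the representation $\mathbb{C}V$, restricted to $W(A)$, contains a copy of the sign representation of $W(A)$ if and only if $A\subseteq\tau(v)$ for some $v\in V$.
   Context: $W$ is a Weyl group with a fixed set $\Delta$ of simple roots; for a root $\alpha$, $s_\alpha$ is the reflection in the hyperplane orthogonal to $\alpha$. A weak $W$-graph is a triple $\Gamma=(V,m,\tau)$ where $V$ is a finite set, $m:V\times V\to\mathbb{C}$ is a map, and $\tau$ is a map from $V$ to the power set of $\Delta$, such that the linear maps $s_\alpha:\mathbb{C}V\to\mathbb{C}V$ ($\alpha\in\Delta$) given on basis vectors by $s_\alpha(v)=-v$ if $\alpha\in\tau(v)$ and $s_\alpha(v)=v-\sum_{u\in V,\ \alpha\in\tau(u)} m(u,v)u$ if $\alpha\notin\tau(v)$ define a representation of $W$ on $\mathbb{C}V$. For $A\subseteq\Delta$, $W(A)$ is the subgroup of $W$ generated by $\{s_\alpha:\alpha\in A\}$; its sign representation is the one-dimensional representation on which each $s_\alpha$, $\alpha\in A$, acts by $-1$. *)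

theory Defs
  imports "HOL-Analysis.Analysis"
begin

definition refl :: "real^'n \<Rightarrow> real^'n \<Rightarrow> real^'n" where
  "refl \<alpha> x = x - ((2 * inner x \<alpha>) / inner \<alpha> \<alpha>) *\<^sub>R \<alpha>"

definition root_system :: "(real^'n) set \<Rightarrow> bool" where
  "root_system \<Phi> \<longleftrightarrow> finite \<Phi> \<and> 0 \<notin> \<Phi>
     \<and> (\<forall>\<alpha>\<in>\<Phi>. refl \<alpha> ` \<Phi> = \<Phi>)
     \<and> (\<forall>\<alpha>\<in>\<Phi>. \<forall>\<beta>\<in>\<Phi>. (2 * inner \<beta> \<alpha>) / inner \<alpha> \<alpha> \<in> \<int>)
     \<and> (\<forall>\<alpha>\<in>\<Phi>. \<forall>c::real. c *\<^sub>R \<alpha> \<in> \<Phi> \<longrightarrow> c = 1 \<or> c = -1)"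

definition simple_system :: "(real^'n) set \<Rightarrow> (real^'n) set \<Rightarrow> bool" where
  "simple_system \<Phi> \<Delta> \<longleftrightarrow> \<Delta> \<subseteq> \<Phi> \<and> independent \<Delta>
     \<and> (\<forall>\<beta>\<in>\<Phi>. \<exists>c :: real^'n \<Rightarrow> real.
          (\<forall>\<alpha>\<in>\<Delta>. c \<alpha> \<in> \<int>)
          \<and> ((\<forall>\<alpha>\<in>\<Delta>. c \<alpha> \<ge> 0) \<or> (\<forall>\<alpha>\<in>\<Delta>. c \<alpha> \<le> 0))
          \<and> \<beta> = (\<Sum>\<alpha>\<in>\<Delta>. c \<alpha> *\<^sub>R \<alpha>))"

inductive_set gen_group :: "('a \<Rightarrow> 'a) set \<Rightarrow> ('a \<Rightarrow> 'a) set" for S where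
  gen_id: "id \<in> gen_group S"
| gen_step: "s \<in> S \<Longrightarrow> w \<in> gen_group S \<Longrightarrow> s \<circ> w \<in> gen_group S"

definition weyl_group :: "(real^'n) set \<Rightarrow> (real^'n \<Rightarrow> real^'n) set" where
  "weyl_group \<Phi> = gen_group (refl ` \<Phi>)"

definition parabolic :: "(real^'n) set \<Rightarrow> (real^'n \<Rightarrow> real^'n) set" where
  "parabolic A = gen_group (refl ` A)"

text \<open>Sign character: each reflection s_alpha acts by -1 (equals the determinant).\<close>
definition sign_char :: "(real^'n \<Rightarrow> real^'n) \<Rightarrow> complex" where
  "sign_char w = complex_of_real (det (matrix w))"

definition wg_basis_img ::
  "('v::finite \<Rightarrow> 'v \<Rightarrow> complex) \<Rightarrow> ('v \<Rightarrow> 'r set) \<Rightarrow> 'r \<Rightarrow> 'v \<Rightarrow> complex^'v" where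
  "wg_basis_img m \<tau> \<alpha> v =
     (if \<alpha> \<in> \<tau> v then - axis v 1
      else axis v 1 - (\<Sum>u\<in>{u. \<alpha> \<in> \<tau> u}. m u v *s axis u 1))"

definition wg_op ::
  "('v::finite \<Rightarrow> 'v \<Rightarrow> complex) \<Rightarrow> ('v \<Rightarrow> 'r set) \<Rightarrow> 'r \<Rightarrow> complex^'v \<Rightarrow> complex^'v" where
  "wg_op m \<tau> \<alpha> x = (\<Sum>v\<in>UNIV. x $ v *s wg_basis_img m \<tau> \<alpha> v)"

text \<open>rho is a representation of W on CV in which each simple reflection s_alpha
  acts by the operator defined by (m,tau); its existence is the weak W-graph axiom.\<close>
definition weak_W_graph_rep ::
  "(real^'n) set \<Rightarrow> (real^'n) set \<Rightarrow> ('v::finite \<Rightarrow> 'v \<Rightarrow> complex) \<Rightarrow> ('v \<Rightarrow> (real^'n) set)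
   \<Rightarrow> ((real^'n \<Rightarrow> real^'n) \<Rightarrow> (complex^'v \<Rightarrow> complex^'v)) \<Rightarrow> bool" where
  "weak_W_graph_rep \<Phi> \<Delta> m \<tau> \<rho> \<longleftrightarrow>
     (\<forall>v. \<tau> v \<subseteq> \<Delta>)
     \<and> \<rho> id = id
     \<and> (\<forall>w1\<in>weyl_group \<Phi>. \<forall>w2\<in>weyl_group \<Phi>. \<rho> (w1 \<circ> w2) = \<rho> w1 \<circ> \<rho> w2)
     \<and> (\<forall>\<alpha>\<in>\<Delta>. \<rho> (refl \<alpha>) = wg_op m \<tau> \<alpha>)"

end

theory Submission imports Defs begin

text \<open>A vector spans a copy of the sign representation of W(A) as soon as every simple
  reflection in A sends it to its negative, because W(A) is generated by these reflections
  and each of them has determinant -1. In the representation on CV, the operator attached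
  to \<alpha> fixes the coordinate of every basis vector u with \<alpha> \<notin> \<tau>(u) and negates the basis
  vectors v with \<alpha> \<in> \<tau>(v). Hence a common (-1)-eigenvector for all \<alpha> \<in> A can only be
  supported on vertices v with A \<subseteq> \<tau>(v), and conversely any such basis vector v is one.\<close>

lemma linear_refl: "linear (refl a)"
proof -
  have lin: "linear (\<lambda>x. x - (inner x a * c) *\<^sub>R a)" for c
    by (rule linearI) (simp_all add: inner_add_left algebra_simps)
  have "refl a = (\<lambda>x. x - (inner x a * (2 / inner a a)) *\<^sub>R a)"
    by (simp add: refl_def fun_eq_iff)
  then show ?thesis
    by (simp only: lin)
qed

lemma refl_scaleR: "c \<noteq> 0 \<Longrightarrow> refl (c *\<^sub>R a) = refl a"
  unfolding refl_def by (auto simp: fun_eq_iff power2_eq_square)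

lemma refl_comp_orthogonal_transformation:
  assumes "orthogonal_transformation f"
  shows "refl (f b) \<circ> f = f \<circ> refl b"
proof -
  have "linear f" and "\<And>v w. f v \<bullet> f w = v \<bullet> w"
    using assms by (auto simp: orthogonal_transformation_def)
  then show ?thesis
    by (simp add: fun_eq_iff refl_def linear_diff linear_scale)
qed

lemma det_refl_axis: "det (matrix (refl (axis k 1 :: real^'n))) = -1"
proof -
  have "matrix (refl (axis k 1 :: real^'n)) $ i $ j = (if i = j then (if i = k then -1 else 1) else 0)"
    for i j
  proof -
    have "axis j (1::real) $ i = (if i = j then 1 else 0)" for i j :: 'n
      by (simp add: axis_def)
    then show ?thesis
      by (simp add: matrix_def refl_def inner_axis_axis)
  qed
  then have "det (matrix (refl (axis k 1 :: real^'n))) = (\<Prod>i\<in>UNIV. if i = k then -1 else 1)"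
    by (subst det_diagonal) auto
  also have "\<dots> = -1"
    by (subst prod.remove[of _ k]) auto
  finally show ?thesis .
qed

text \<open>Any reflection is conjugate, by an orthogonal transformation, to the reflection in a
  coordinate axis.\<close>

lemma det_refl:
  assumes "(a :: real^'n) \<noteq> 0"
  shows "det (matrix (refl a)) = -1"
proof -
  obtain k :: 'n where True
    by simp
  define b where "b = norm a *\<^sub>R axis k (1::real)"
  obtain f where f: "orthogonal_transformation f" "f b = a"
    using orthogonal_transformation_exists[of b a] by (auto simp: b_def)
  have "linear f"
    using f(1) by (simp add: orthogonal_transformation_def)
  have "det (matrix (refl a)) * det (matrix f) = det (matrix f) * det (matrix (refl b))"
    using refl_comp_orthogonal_transformation[OF f(1), of b]
    by (metis f(2) det_mul matrix_compose[OF \<open>linear f\<close> linear_refl]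
        matrix_compose[OF linear_refl \<open>linear f\<close>])
  moreover have "det (matrix f) \<noteq> 0"
    using f(1) det_orthogonal_matrix orthogonal_transformation_matrix by fastforce
  ultimately have "det (matrix (refl a)) = det (matrix (refl b))"
    by simp
  also have "refl b = refl (axis k 1)"
    using assms by (simp add: b_def refl_scaleR)
  finally show ?thesis
    by (simp add: det_refl_axis)
qed

lemma sign_char_refl: "a \<noteq> 0 \<Longrightarrow> sign_char (refl a) = -1"
  by (simp add: sign_char_def det_refl)

lemma sign_char_id: "sign_char id = 1"
  by (simp add: sign_char_def matrix_id_mat_1)

lemma sign_char_comp: "linear f \<Longrightarrow> linear g \<Longrightarrow> sign_char (f \<circ> g) = sign_char f * sign_char g"
  by (simp add: sign_char_def matrix_compose det_mul)

lemma gen_group_generator: "s \<in> S \<Longrightarrow> s \<in> gen_group S"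
  using gen_step[OF _ gen_id] by fastforce

lemma gen_group_mono:
  assumes "S \<subseteq> T"
  shows "gen_group S \<subseteq> gen_group T"
proof
  fix w assume "w \<in> gen_group S"
  then show "w \<in> gen_group T"
    by induction (use assms in \<open>blast intro: gen_group.intros\<close>)+
qed

lemma linear_gen_group:
  assumes "\<And>s. s \<in> S \<Longrightarrow> linear s" and "w \<in> gen_group S"
  shows "linear w"
  using assms(2)
proof (induction rule: gen_group.induct)
  case gen_id
  show ?case
    by (rule linear_id)
next
  case (gen_step s w)
  then show ?case
    using assms(1) linear_compose by blast
qed

lemma parabolic_subset_weyl_group: "A \<subseteq> \<Phi> \<Longrightarrow> parabolic A \<subseteq> weyl_group \<Phi>"
  unfolding parabolic_def weyl_group_def by (intro gen_group_mono image_mono)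

lemma sign_eigenvector_gen_group_iff:
  fixes \<rho> :: "(real^'n \<Rightarrow> real^'n) \<Rightarrow> complex^'v \<Rightarrow> complex^'v"
  assumes gens: "\<And>s. s \<in> S \<Longrightarrow> linear s \<and> sign_char s = -1"
    and hom_id: "\<rho> id = id"
    and hom: "\<And>w1 w2. w1 \<in> gen_group S \<Longrightarrow> w2 \<in> gen_group S \<Longrightarrow> \<rho> (w1 \<circ> w2) = \<rho> w1 \<circ> \<rho> w2"
    and homogeneous: "\<And>s c y. s \<in> S \<Longrightarrow> \<rho> s (c *s y) = c *s \<rho> s y"
  shows "(\<forall>w\<in>gen_group S. \<rho> w x = sign_char w *s x) \<longleftrightarrow> (\<forall>s\<in>S. \<rho> s x = - x)"
proof
  assume sign: "\<forall>w\<in>gen_group S. \<rho> w x = sign_char w *s x"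
  show "\<forall>s\<in>S. \<rho> s x = - x"
  proof
    fix s assume "s \<in> S"
    then have "\<rho> s x = sign_char s *s x"
      using sign gen_group_generator by blast
    then show "\<rho> s x = - x"
      using gens[OF \<open>s \<in> S\<close>] by (metis vector_sneg_minus1)
  qed
next
  assume neg: "\<forall>s\<in>S. \<rho> s x = - x"
  have "\<rho> w x = sign_char w *s x" if "w \<in> gen_group S" for w
    using that
  proof (induction w rule: gen_group.induct)
    case gen_id
    have "\<rho> id x = sign_char id *s x"
      by (simp add: hom_id sign_char_id)
    then show ?case
      by (simp add: id_def)
  next
    case (gen_step s w)
    have "linear w"
      using linear_gen_group[OF _ gen_step.hyps(2)] gens by blast
    then have "sign_char (s \<circ> w) = - sign_char w"
      using gens[OF gen_step.hyps(1)] by (simp add: sign_char_comp)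
    have "\<rho> (s \<circ> w) x = \<rho> s (sign_char w *s x)"
      using hom[OF gen_group_generator gen_step.hyps(2)] gen_step by simp
    also have "\<dots> = sign_char w *s - x"
      using homogeneous neg gen_step.hyps(1) by simp
    also have "\<dots> = sign_char (s \<circ> w) *s x"
      using \<open>sign_char (s \<circ> w) = - sign_char w\<close> by (simp add: vec_eq_iff)
    finally show ?case .
  qed
  then show "\<forall>w\<in>gen_group S. \<rho> w x = sign_char w *s x"
    by blast
qed

lemma wg_op_scale: "wg_op m \<tau> \<alpha> (c *s x) = c *s wg_op m \<tau> \<alpha> x"
  by (simp add: wg_op_def vec_eq_iff sum_component sum_distrib_left mult.assoc)

lemma wg_op_component_notin:
  assumes "\<alpha> \<notin> \<tau> u"
  shows "wg_op m \<tau> \<alpha> x $ u = x $ u"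
proof -
  have img: "wg_basis_img m \<tau> \<alpha> v $ u = (if v = u then 1 else 0)" for v
    using assms by (auto simp: wg_basis_img_def axis_def sum_component intro!: sum.neutral)
  show ?thesis
    by (simp add: wg_op_def sum_component img if_distrib cong: if_cong)
qed

lemma wg_op_axis_in:
  assumes "\<alpha> \<in> \<tau> v"
  shows "wg_op m \<tau> \<alpha> (axis v 1) = - axis v 1"
proof -
  have "wg_op m \<tau> \<alpha> (axis v 1) = (\<Sum>u\<in>UNIV. if u = v then wg_basis_img m \<tau> \<alpha> v else 0)"
    unfolding wg_op_def by (rule sum.cong) (auto simp: axis_def)
  then show ?thesis
    using assms by (simp add: wg_basis_img_def)
qed

lemma wg_op_common_neg_eigenvector_iff:
  "(\<exists>x. x \<noteq> 0 \<and> (\<forall>\<alpha>\<in>A. wg_op m \<tau> \<alpha> x = - x)) \<longleftrightarrow> (\<exists>v. A \<subseteq> \<tau> v)"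
proof
  assume "\<exists>x. x \<noteq> 0 \<and> (\<forall>\<alpha>\<in>A. wg_op m \<tau> \<alpha> x = - x)"
  then obtain x u where neg: "\<forall>\<alpha>\<in>A. wg_op m \<tau> \<alpha> x = - x" and "x $ u \<noteq> 0"
    by (auto simp: vec_eq_iff)
  have "\<alpha> \<in> \<tau> u" if "\<alpha> \<in> A" for \<alpha>
  proof (rule ccontr)
    assume "\<alpha> \<notin> \<tau> u"
    then have "x $ u = - x $ u"
      using wg_op_component_notin[of \<alpha> \<tau> u m x] neg that by simp
    with \<open>x $ u \<noteq> 0\<close> show False
      by simp
  qed
  then show "\<exists>v. A \<subseteq> \<tau> v"
    by blast
next
  assume "\<exists>v. A \<subseteq> \<tau> v"
  then show "\<exists>x. x \<noteq> 0 \<and> (\<forall>\<alpha>\<in>A. wg_op m \<tau> \<alpha> x = - x)"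
    by (metis axis_eq_0_iff subsetD wg_op_axis_in zero_neq_one)
qed

theorem corollary2p9:
  fixes \<Phi> \<Delta> A :: "(real^'n) set"
    and m :: "'v::finite \<Rightarrow> 'v \<Rightarrow> complex"
    and \<tau> :: "'v \<Rightarrow> (real^'n) set"
    and \<rho> :: "(real^'n \<Rightarrow> real^'n) \<Rightarrow> (complex^'v \<Rightarrow> complex^'v)"
  assumes "root_system \<Phi>"
    and "simple_system \<Phi> \<Delta>"
    and "weak_W_graph_rep \<Phi> \<Delta> m \<tau> \<rho>"
    and "A \<subseteq> \<Delta>"
  shows "(\<exists>x. x \<noteq> 0 \<and> (\<forall>w\<in>parabolic A. \<rho> w x = sign_char w *s x))
         \<longleftrightarrow> (\<exists>v. A \<subseteq> \<tau> v)"
proof -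
  have "A \<subseteq> \<Phi>" "0 \<notin> A"
    using assms(1,2,4) by (auto simp: root_system_def simple_system_def)
  have \<rho>_id: "\<rho> id = id"
    and \<rho>_refl: "\<And>\<alpha>. \<alpha> \<in> A \<Longrightarrow> \<rho> (refl \<alpha>) = wg_op m \<tau> \<alpha>"
    using assms(3,4) by (auto simp: weak_W_graph_rep_def)
  have \<rho>_comp: "\<rho> (w1 \<circ> w2) = \<rho> w1 \<circ> \<rho> w2" if "w1 \<in> parabolic A" "w2 \<in> parabolic A" for w1 w2
    using assms(3) parabolic_subset_weyl_group[OF \<open>A \<subseteq> \<Phi>\<close>] that
    unfolding weak_W_graph_rep_def by blast
  have refl_A: "linear s \<and> sign_char s = -1" if "s \<in> refl ` A" for s
    using that \<open>0 \<notin> A\<close> by (force simp: linear_refl intro: sign_char_refl)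
  have \<rho>_scale: "\<rho> s (c *s y) = c *s \<rho> s y" if "s \<in> refl ` A" for s c y
    using that by (auto simp: \<rho>_refl wg_op_scale)
  have sign_iff: "(\<forall>w\<in>parabolic A. \<rho> w x = sign_char w *s x) \<longleftrightarrow> (\<forall>s\<in>refl ` A. \<rho> s x = - x)" for x
    unfolding parabolic_def
    by (rule sign_eigenvector_gen_group_iff[OF refl_A \<rho>_id \<rho>_comp[unfolded parabolic_def] \<rho>_scale])
  have neg_iff: "(\<forall>s\<in>refl ` A. \<rho> s x = - x) \<longleftrightarrow> (\<forall>\<alpha>\<in>A. wg_op m \<tau> \<alpha> x = - x)" for x
    using \<rho>_refl by auto
  show ?thesis
    unfolding sign_iff neg_iff by (rule wg_op_common_neg_eigenvector_iff)
qed

end
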